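(* Let $\mathscr T=(V,\mathcal E)$ be the directed Cartesian product of rooted directed trees $\mathscr T_1,\dots,\mathscr T_d$ and let $S_{\boldsymbol\lambda}=(S_1,\dots,S_d)$ be a commuting multishift on $\mathscr T$. Then for each $j=1,\dots,d$, $S_j$ is analytic, i.e. $\bigcap_{n\in\mathbb N}\mathrm{ran}\,S_j^n=\{0\}$.
   Context: Directed trees: no loops or circuits, connected ignoring orientation, unique parent $\mathsf{par}(v)$ for vertices with incoming edges; rooted: unique parentless vertex $\mathsf{root}$; $\mathsf{Chi}(u)=\{v:(u,v)\in\mathcal E\}$; all leafless. Directed Cartesian product of rooted trees $\mathscr T_j=(V_j,\mathcal E_j)$: $V=V_1\times\dots\times V_d$ (countably infinite), $(v,w)\in\mathcal E$ iff for some $k$, $(v_k,w_k)\in\mathcal E_k$ and $w_j=v_j$ ($j\ne k$). $\mathsf{par}_j(v)$ replaces $v_j\ne\mathsf{root}_j$ by $\mathsf{par}(v_j)$. Multishift with positive weights $\lambda^{(j)}_v$: $(S_jf)(v)=\lambda^{(j)}_vf(\mathsf{par}_j(v))$ if $v_j\ne\mathsf{root}_j$, else $0$; each $S_j$ bounded on $l^2(V)$. *)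

theory Defs
  imports "HOL-Analysis.Analysis"
begin

definition directed_tree :: "'a set \<Rightarrow> ('a \<times> 'a) set \<Rightarrow> bool" where
  "directed_tree V E \<longleftrightarrow>
     E \<subseteq> V \<times> V \<and>
     (\<forall>v. (v, v) \<notin> E) \<and>                                   \<comment> \<open>no loops\<close>
     (\<forall>v. (v, v) \<notin> E\<^sup>+) \<and>                                 \<comment> \<open>no circuits\<close>
     (\<forall>v\<in>V. \<forall>w\<in>V. (v, w) \<in> (E \<union> E\<inverse>)\<^sup>*) \<and>              \<comment> \<open>connected ignoring orientation\<close>
     (\<forall>u w v. (u, v) \<in> E \<longrightarrow> (w, v) \<in> E \<longrightarrow> u = w)"

definition rooted_directed_tree :: "'a set \<Rightarrow> ('a \<times> 'a) set \<Rightarrow> bool" where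
  "rooted_directed_tree V E \<longleftrightarrow> directed_tree V E \<and>
     (\<exists>!r. r \<in> V \<and> (\<forall>u. (u, r) \<notin> E))"

definition leafless :: "'a set \<Rightarrow> ('a \<times> 'a) set \<Rightarrow> bool" where
  "leafless V E \<longleftrightarrow> (\<forall>u\<in>V. \<exists>v. (u, v) \<in> E)"

definition tree_root :: "'a set \<Rightarrow> ('a \<times> 'a) set \<Rightarrow> 'a" where
  "tree_root V E = (THE r. r \<in> V \<and> (\<forall>u. (u, r) \<notin> E))"

definition tree_par :: "('a \<times> 'a) set \<Rightarrow> 'a \<Rightarrow> 'a" where
  "tree_par E v = (THE u. (u, v) \<in> E)"

definition prod_vertices :: "nat \<Rightarrow> (nat \<Rightarrow> 'a set) \<Rightarrow> (nat \<Rightarrow> 'a) set" where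
  "prod_vertices d Vs = PiE {..<d} Vs"

definition prod_par :: "(nat \<Rightarrow> ('a \<times> 'a) set) \<Rightarrow> nat \<Rightarrow> (nat \<Rightarrow> 'a) \<Rightarrow> (nat \<Rightarrow> 'a)" where
  "prod_par Es j v = v(j := tree_par (Es j) (v j))"

definition l2_space :: "'v set \<Rightarrow> ('v \<Rightarrow> complex) set" where
  "l2_space V = {f. (\<forall>v. v \<notin> V \<longrightarrow> f v = 0) \<and> (\<lambda>v. (cmod (f v))\<^sup>2) summable_on V}"

definition l2_norm :: "'v set \<Rightarrow> ('v \<Rightarrow> complex) \<Rightarrow> real" where
  "l2_norm V f = sqrt (\<Sum>\<^sub>\<infinity>v\<in>V. (cmod (f v))\<^sup>2)"

definition multishift_comp ::
  "nat \<Rightarrow> (nat \<Rightarrow> 'a set) \<Rightarrow> (nat \<Rightarrow> ('a \<times> 'a) set) \<Rightarrow> (nat \<Rightarrow> (nat \<Rightarrow> 'a) \<Rightarrow> real)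
     \<Rightarrow> nat \<Rightarrow> ((nat \<Rightarrow> 'a) \<Rightarrow> complex) \<Rightarrow> ((nat \<Rightarrow> 'a) \<Rightarrow> complex)" where
  "multishift_comp d Vs Es lam j f = (\<lambda>v.
     if v \<in> prod_vertices d Vs \<and> v j \<noteq> tree_root (Vs j) (Es j)
     then complex_of_real (lam j v) * f (prod_par Es j v) else 0)"

end

theory Submission
  imports Defs
begin

text \<open>Every vertex of a rooted directed tree has finite depth: finitely many steps to the parent
  reach the root. The weighted shift along coordinate \<open>j\<close> moves values one step away from the
  root in the \<open>j\<close>-th coordinate, so anything in the range of \<open>S\<^sub>j\<^sup>n\<close> vanishes at every vertex
  whose \<open>j\<close>-th coordinate has depth less than \<open>n\<close>. Hence a vector in all ranges vanishes
  everywhere.\<close>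

lemma
  assumes "rooted_directed_tree V E"
  shows tree_root_in: "tree_root V E \<in> V"
    and no_edge_into_tree_root: "(u, tree_root V E) \<notin> E"
proof -
  have "\<exists>!r. r \<in> V \<and> (\<forall>u. (u, r) \<notin> E)"
    using assms by (simp add: rooted_directed_tree_def)
  from theI'[OF this] show "tree_root V E \<in> V" "(u, tree_root V E) \<notin> E"
    unfolding tree_root_def by auto
qed

lemma tree_par_eqI:
  assumes "directed_tree V E" "(u, v) \<in> E"
  shows "tree_par E v = u"
  using assms unfolding tree_par_def directed_tree_def by blast

lemma tree_root_reaches:
  assumes T: "rooted_directed_tree V E" and x: "x \<in> V"
  shows "(tree_root V E, x) \<in> E\<^sup>*"
proof -
  let ?r = "tree_root V E"
  have dt: "directed_tree V E" using T by (simp add: rooted_directed_tree_def)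
  have "(?r, x) \<in> (E \<union> E\<inverse>)\<^sup>*"
    using dt tree_root_in[OF T] x by (simp add: directed_tree_def)
  then show ?thesis
  proof (induction rule: rtrancl_induct)
    case base
    then show ?case by simp
  next
    case (step y z)
    show ?case
    proof (cases "(y, z) \<in> E")
      case True
      with step.IH show ?thesis by (rule rtrancl_into_rtrancl)
    next
      case False
      then have zy: "(z, y) \<in> E" using step.hyps(2) by auto
      \<comment> \<open>\<open>y\<close> has a parent, so it is not the root; the parent on the path from the root is \<open>z\<close>.\<close>
      then have "y \<noteq> ?r" using no_edge_into_tree_root[OF T] by auto
      then have "(?r, y) \<in> E\<^sup>+" using step.IH by (metis rtranclD)
      then obtain u where "(?r, u) \<in> E\<^sup>*" "(u, y) \<in> E" by (meson tranclD2)
      with zy dt show ?thesis by (metis tree_par_eqI)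
    qed
  qed
qed

lemma funpow_tree_par_reaches_root:
  assumes T: "rooted_directed_tree V E" and x: "x \<in> V"
  shows "\<exists>n. (tree_par E ^^ n) x = tree_root V E"
  using tree_root_reaches[OF assms]
proof (induction rule: rtrancl_induct)
  case base
  show ?case by (rule exI[of _ 0]) simp
next
  case (step y z)
  then obtain n where "(tree_par E ^^ n) y = tree_root V E" by blast
  moreover have "tree_par E z = y"
    using T step.hyps(2) by (meson rooted_directed_tree_def tree_par_eqI)
  ultimately have "(tree_par E ^^ Suc n) z = tree_root V E" by (simp only: funpow_Suc_right o_apply)
  then show ?case by blast
qed

lemma multishift_comp_outside:
  "v \<notin> prod_vertices d Vs \<Longrightarrow> multishift_comp d Vs Es lam j f v = 0"
  by (simp add: multishift_comp_def)

lemma multishift_comp_at_root: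
  "v j = tree_root (Vs j) (Es j) \<Longrightarrow> multishift_comp d Vs Es lam j f v = 0"
  by (simp add: multishift_comp_def)

lemma multishift_comp_eq_0_if_at_par:
  "f (prod_par Es j v) = 0 \<Longrightarrow> multishift_comp d Vs Es lam j f v = 0"
  by (simp add: multishift_comp_def)

lemma multishift_comp_funpow_zero:
  "(multishift_comp d Vs Es lam j ^^ n) (\<lambda>_. 0) = (\<lambda>_. 0)"
  by (induction n) (auto simp: multishift_comp_def)

lemma multishift_comp_funpow_vanishes_near_root:
  assumes "k < n" "(tree_par (Es j) ^^ k) (v j) = tree_root (Vs j) (Es j)"
  shows "(multishift_comp d Vs Es lam j ^^ n) f v = 0"
  using assms
proof (induction n arbitrary: k v)
  case 0
  then show ?case by simp
next
  case (Suc n)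
  show ?case
  proof (cases k)
    case 0
    with Suc.prems(2) have "v j = tree_root (Vs j) (Es j)" by simp
    then show ?thesis unfolding funpow.simps o_apply by (rule multishift_comp_at_root)
  next
    case (Suc m)
    have "prod_par Es j v j = tree_par (Es j) (v j)" by (simp add: prod_par_def)
    with Suc.prems \<open>k = Suc m\<close>
    have "(multishift_comp d Vs Es lam j ^^ n) f (prod_par Es j v) = 0"
      by (intro Suc.IH[of m]) (simp_all only: funpow_Suc_right o_apply)
    then show ?thesis unfolding funpow.simps o_apply by (rule multishift_comp_eq_0_if_at_par)
  qed
qed

lemma multishift_comp_in_all_ranges_eq_0:
  assumes T: "rooted_directed_tree (Vs j) (Es j)" and j: "j < d"
    and g: "\<And>n. g \<in> range (multishift_comp d Vs Es lam j ^^ n)"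
  shows "g = (\<lambda>_. 0)"
proof
  fix v
  show "g v = 0"
  proof (cases "v \<in> prod_vertices d Vs")
    case False
    from g[of 1] obtain f where "g = multishift_comp d Vs Es lam j f" by auto
    with False show ?thesis by (simp add: multishift_comp_outside)
  next
    case True
    then have "v j \<in> Vs j" using j by (auto simp: prod_vertices_def)
    then obtain m where m: "(tree_par (Es j) ^^ m) (v j) = tree_root (Vs j) (Es j)"
      using funpow_tree_par_reaches_root[OF T] by blast
    from g obtain f where "g = (multishift_comp d Vs Es lam j ^^ Suc m) f" by blast
    moreover have "(multishift_comp d Vs Es lam j ^^ Suc m) f v = 0"
      by (rule multishift_comp_funpow_vanishes_near_root[where Es = Es and Vs = Vs and v = v
            and j = j, OF lessI m])
    ultimately show ?thesis by simp
  qed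
qed

theorem mainTheorem14:
  fixes d :: nat
    and Vs :: "nat \<Rightarrow> 'a set"
    and Es :: "nat \<Rightarrow> ('a \<times> 'a) set"
    and lam :: "nat \<Rightarrow> (nat \<Rightarrow> 'a) \<Rightarrow> real"
  defines "V \<equiv> prod_vertices d Vs"
      and "S \<equiv> multishift_comp d Vs Es lam"
  assumes trees: "\<And>k. k < d \<Longrightarrow> rooted_directed_tree (Vs k) (Es k)"
      and leafless: "\<And>k. k < d \<Longrightarrow> leafless (Vs k) (Es k)"
      and countable: "\<And>k. k < d \<Longrightarrow> countable (Vs k)"
      and pos: "\<And>k v. k < d \<Longrightarrow> v \<in> V \<Longrightarrow> v k \<noteq> tree_root (Vs k) (Es k) \<Longrightarrow> lam k v > 0"
      and bounded: "\<And>k. k < d \<Longrightarrow> \<exists>C. \<forall>f\<in>l2_space V.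
                        S k f \<in> l2_space V \<and> l2_norm V (S k f) \<le> C * l2_norm V f"
      and commuting: "\<And>k l f. k < d \<Longrightarrow> l < d \<Longrightarrow> f \<in> l2_space V \<Longrightarrow>
                        S k (S l f) = S l (S k f)"
      and j: "j < d"
  shows "(\<Inter>n. (S j ^^ n) ` l2_space V) = {\<lambda>_. 0}"
proof -
  have "g = (\<lambda>_. 0)" if "g \<in> (\<Inter>n. (S j ^^ n) ` l2_space V)" for g
    using that unfolding S_def
    by (intro multishift_comp_in_all_ranges_eq_0[where Vs = Vs and Es = Es, OF trees[OF j] j]) blast
  moreover have "(\<lambda>_. 0) \<in> (S j ^^ n) ` l2_space V" for n
  proof (rule image_eqI)
    show "(\<lambda>_. 0) = (S j ^^ n) (\<lambda>_. 0)"
      unfolding S_def by (rule multishift_comp_funpow_zero[symmetric])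
    show "(\<lambda>_. 0) \<in> l2_space V" by (simp add: l2_space_def)
  qed
  ultimately show ?thesis by blast
qed

end
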